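(* Let $\langle S,L,\tau,\ell\rangle$ be a labelled Markov chain. For every robust bisimulation $R\subseteq S\times S$ we have $R\subseteq\,\simeq$. (Together with the fact that $\simeq$ is a robust bisimulation, $\simeq$ is the greatest robust bisimulation.)
   Context: Labelled Markov chain $\langle S,L,\tau,\ell\rangle$: finite $S$, finite $L$, $\tau:S\to\mathcal{D}(S)$, $\ell:S\to L$, $|\ell(S)|\ge 2$. $\Omega(\mu,\nu)$ = couplings (distributions on $S\times S$ with marginals $\mu,\nu$). A (probabilistic) bisimulation is an equivalence relation $R\subseteq S\times S$ such that for all $(s,t)\in R$, $\ell(s)=\ell(t)$ and some $\omega\in\Omega(\tau(s),\tau(t))$ has $\mathrm{support}(\omega)\subseteq R$. $S^2_\Delta=\{(s,s)\}$, $S^2_1=\{(s,t)\mid\ell(s)\ne\ell(t)\}$. A policy is $P:S\times S\to\mathcal{D}(S\times S)$ with $P(s,t)\in\Omega(\tau(s),\tau(t))$ for $(s,t)\notin S^2_1$ and $P(s,t)$ the point mass at $(s,t)$ for $(s,t)\in S^2_1$; $\mathcal{P}$ is the set of policies; $P$ induces the Markov chain $\langle S\times S,P\rangle$. Robust bisimilarity: $s\simeq t$ iff some $P\in\mathcal{P}$ makes $(s,t)$ reach $S^2_\Delta$ with probability $1$ in $\langle S\times S,P\rangle$. For a policy $P$, a set $R$ supports a path $(u_1,v_1)\dots(u_n,v_n)$ of $\langle S\times S,P\rangle$ if $(u_i,v_i)\in R$ and $\mathrm{support}(P(u_i,v_i))\subseteq R$ for all $i$. A robust bisimulation is a bisimulation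 $R$ such that for every $(s,t)\in R$ there is $P\in\mathcal{P}$ such that $R$ supports a path from $(s,t)$ to $S^2_\Delta$ in $\langle S\times S,P\rangle$. *)

theory Defs
  imports "HOL-Probability.Probability"
begin

text \<open>Labelled Markov chain: state type 's (finite), label type 'l (finite),
  transition function tau :: 's => 's pmf, labelling ell :: 's => 'l.\<close>

definition couplings :: "'s pmf \<Rightarrow> 't pmf \<Rightarrow> ('s \<times> 't) pmf set" where
  "couplings \<mu> \<nu> = {\<omega>. map_pmf fst \<omega> = \<mu> \<and> map_pmf snd \<omega> = \<nu>}"

definition diag_pairs :: "('s \<times> 's) set" where
  "diag_pairs = {(s, s) | s. True}"

definition diff_label_pairs :: "('s \<Rightarrow> 'l) \<Rightarrow> ('s \<times> 's) set" where
  "diff_label_pairs lbl = {(s, t). lbl s \<noteq> lbl t}"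

definition is_bisimulation ::
  "('s \<Rightarrow> 's pmf) \<Rightarrow> ('s \<Rightarrow> 'l) \<Rightarrow> ('s \<times> 's) set \<Rightarrow> bool" where
  "is_bisimulation \<tau> lbl R \<longleftrightarrow> equiv UNIV R \<and>
     (\<forall>(s, t) \<in> R. lbl s = lbl t \<and>
        (\<exists>\<omega> \<in> couplings (\<tau> s) (\<tau> t). set_pmf \<omega> \<subseteq> R))"

definition policies ::
  "('s \<Rightarrow> 's pmf) \<Rightarrow> ('s \<Rightarrow> 'l) \<Rightarrow> ('s \<times> 's \<Rightarrow> ('s \<times> 's) pmf) set" where
  "policies \<tau> lbl = {P. \<forall>s t.
      ((s, t) \<notin> diff_label_pairs lbl \<longrightarrow> P (s, t) \<in> couplings (\<tau> s) (\<tau> t)) \<and>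
      ((s, t) \<in> diff_label_pairs lbl \<longrightarrow> P (s, t) = return_pmf (s, t))}"

fun reach_within :: "('a \<Rightarrow> 'a pmf) \<Rightarrow> 'a set \<Rightarrow> nat \<Rightarrow> 'a \<Rightarrow> real" where
  "reach_within P T 0 x = (if x \<in> T then 1 else 0)"
| "reach_within P T (Suc n) x =
     (if x \<in> T then 1 else measure_pmf.expectation (P x) (reach_within P T n))"

definition reach_prob :: "('a \<Rightarrow> 'a pmf) \<Rightarrow> 'a set \<Rightarrow> 'a \<Rightarrow> real" where
  "reach_prob P T x = (SUP n. reach_within P T n x)"

definition robustly_bisimilar ::
  "('s \<Rightarrow> 's pmf) \<Rightarrow> ('s \<Rightarrow> 'l) \<Rightarrow> 's \<Rightarrow> 's \<Rightarrow> bool" where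
  "robustly_bisimilar \<tau> lbl s t \<longleftrightarrow>
     (\<exists>P \<in> policies \<tau> lbl. reach_prob P diag_pairs (s, t) = 1)"

definition is_path :: "('a \<Rightarrow> 'a pmf) \<Rightarrow> 'a list \<Rightarrow> bool" where
  "is_path P xs \<longleftrightarrow> xs \<noteq> [] \<and>
     (\<forall>i. Suc i < length xs \<longrightarrow> xs ! Suc i \<in> set_pmf (P (xs ! i)))"

definition supports_path :: "('a \<Rightarrow> 'a pmf) \<Rightarrow> 'a set \<Rightarrow> 'a list \<Rightarrow> bool" where
  "supports_path P R xs \<longleftrightarrow> (\<forall>x \<in> set xs. x \<in> R \<and> set_pmf (P x) \<subseteq> R)"

definition is_robust_bisimulation ::
  "('s \<Rightarrow> 's pmf) \<Rightarrow> ('s \<Rightarrow> 'l) \<Rightarrow> ('s \<times> 's) set \<Rightarrow> bool" where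
  "is_robust_bisimulation \<tau> lbl R \<longleftrightarrow> is_bisimulation \<tau> lbl R \<and>
     (\<forall>(s, t) \<in> R. \<exists>P \<in> policies \<tau> lbl. \<exists>xs.
        is_path P xs \<and> hd xs = (s, t) \<and> last xs \<in> diag_pairs \<and> supports_path P R xs)"

end

theory Submission
  imports Defs
begin

text \<open>Fix a policy that, at every non-diagonal pair of R, moves like the policy
  witnessing a shortest R-supported path from that pair to the diagonal. Then R is
  closed under this policy off the diagonal, and from every such pair some successor
  is strictly closer to the diagonal. The probability h of reaching the diagonal
  satisfies h(x) = E[h] at non-diagonal x, so h attains its minimum on R at a pair
  closest to the diagonal among all minimisers; that pair is itself diagonal, hence
  the minimum of h on R is 1.\<close>

lemma expectation_finite_pmf:
  "measure_pmf.expectation (p :: 'a::finite pmf) f = (\<Sum>y\<in>UNIV. f y * pmf p y)"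
  by (rule integral_measure_pmf_real) auto

lemma expectation_eq_lower_bound_imp_eq:
  fixes p :: "'a::finite pmf" and f :: "'a \<Rightarrow> real"
  assumes bound: "\<And>z. z \<in> set_pmf p \<Longrightarrow> c \<le> f z"
    and mean: "measure_pmf.expectation p f = c"
    and y: "y \<in> set_pmf p"
  shows "f y = c"
proof -
  have nonneg: "0 \<le> (f z - c) * pmf p z" for z
    using bound[of z] by (cases "z \<in> set_pmf p") (auto simp: set_pmf_iff)
  have "(\<Sum>z\<in>UNIV. (f z - c) * pmf p z) = (\<Sum>z\<in>UNIV. f z * pmf p z) - c * (\<Sum>z\<in>UNIV. pmf p z)"
    by (simp add: left_diff_distrib sum_subtractf sum_distrib_left)
  also have "\<dots> = 0"
    using mean sum_pmf_eq_1[of UNIV p] by (simp add: expectation_finite_pmf)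
  finally have "(f y - c) * pmf p y = 0"
    using nonneg by (subst (asm) sum_nonneg_eq_0_iff) auto
  then show ?thesis
    using y by (simp add: set_pmf_iff)
qed

lemma reach_within_bounds:
  fixes P :: "'a::finite \<Rightarrow> 'a pmf"
  shows "0 \<le> reach_within P T n x \<and> reach_within P T n x \<le> 1"
proof (induction n arbitrary: x)
  case 0
  then show ?case by simp
next
  case (Suc n)
  have "(\<Sum>y\<in>UNIV. reach_within P T n y * pmf (P x) y) \<le> (\<Sum>y\<in>UNIV. pmf (P x) y)"
    by (rule sum_mono) (use Suc in \<open>auto intro: mult_left_le_one_le\<close>)
  moreover have "0 \<le> (\<Sum>y\<in>UNIV. reach_within P T n y * pmf (P x) y)"
    by (rule sum_nonneg) (use Suc in auto)
  ultimately show ?case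
    using sum_pmf_eq_1[of UNIV "P x"] by (simp add: expectation_finite_pmf)
qed

lemma reach_within_Suc_ge:
  fixes P :: "'a::finite \<Rightarrow> 'a pmf"
  shows "reach_within P T n x \<le> reach_within P T (Suc n) x"
proof (induction n arbitrary: x)
  case 0
  show ?case
    using reach_within_bounds[of P T 0] by (auto simp: expectation_finite_pmf intro!: sum_nonneg)
next
  case (Suc n)
  have "(\<Sum>y\<in>UNIV. reach_within P T n y * pmf (P x) y)
      \<le> (\<Sum>y\<in>UNIV. reach_within P T (Suc n) y * pmf (P x) y)"
    by (intro sum_mono mult_right_mono Suc.IH pmf_nonneg)
  then show ?case
    by (simp only: reach_within.simps expectation_finite_pmf) auto
qed

lemma reach_within_tendsto_reach_prob:
  fixes P :: "'a::finite \<Rightarrow> 'a pmf"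
  shows "(\<lambda>n. reach_within P T n x) \<longlonglongrightarrow> reach_prob P T x"
  unfolding reach_prob_def
proof (rule LIMSEQ_incseq_SUP)
  show "bdd_above (range (\<lambda>n. reach_within P T n x))"
    by (auto simp: bdd_above_def intro: reach_within_bounds[THEN conjunct2])
  show "incseq (\<lambda>n. reach_within P T n x)"
    by (rule incseq_SucI) (rule reach_within_Suc_ge)
qed

lemma reach_prob_le_1:
  fixes P :: "'a::finite \<Rightarrow> 'a pmf"
  shows "reach_prob P T x \<le> 1"
  unfolding reach_prob_def by (rule cSUP_least) (auto intro: reach_within_bounds[THEN conjunct2])

lemma reach_prob_target:
  assumes "x \<in> T"
  shows "reach_prob P T x = 1"
proof -
  have "reach_within P T n x = 1" for n
    using assms by (cases n) auto
  then show ?thesis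
    unfolding reach_prob_def by simp
qed

lemma reach_prob_unfold:
  fixes P :: "'a::finite \<Rightarrow> 'a pmf"
  assumes "x \<notin> T"
  shows "reach_prob P T x = measure_pmf.expectation (P x) (reach_prob P T)"
proof -
  have "(\<lambda>n. reach_within P T (Suc n) x) \<longlonglongrightarrow> reach_prob P T x"
    using reach_within_tendsto_reach_prob LIMSEQ_Suc by blast
  moreover have "(\<lambda>n. reach_within P T (Suc n) x)
      = (\<lambda>n. \<Sum>y\<in>UNIV. reach_within P T n y * pmf (P x) y)"
    using assms by (simp add: expectation_finite_pmf)
  moreover have "(\<lambda>n. \<Sum>y\<in>UNIV. reach_within P T n y * pmf (P x) y)
      \<longlonglongrightarrow> (\<Sum>y\<in>UNIV. reach_prob P T y * pmf (P x) y)"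
    by (intro tendsto_sum tendsto_mult_right reach_within_tendsto_reach_prob)
  ultimately show ?thesis
    using LIMSEQ_unique by (metis expectation_finite_pmf)
qed

lemma reach_prob_eq_1_if_descending:
  fixes P :: "'a::finite \<Rightarrow> 'a pmf" and rk :: "'a \<Rightarrow> nat"
  assumes closed: "\<And>x. x \<in> R \<Longrightarrow> x \<notin> T \<Longrightarrow> set_pmf (P x) \<subseteq> R"
    and descend: "\<And>x. x \<in> R \<Longrightarrow> x \<notin> T \<Longrightarrow> \<exists>y \<in> set_pmf (P x). rk y < rk x"
    and "x \<in> R"
  shows "reach_prob P T x = 1"
proof -
  define h where "h = reach_prob P T"
  define c where "c = Min (h ` R)"
  have c_le: "c \<le> h z" if "z \<in> R" for z
    unfolding c_def using that by simp
  have "c \<in> h ` R"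
    unfolding c_def using \<open>x \<in> R\<close> by (intro Min_in) auto
  then obtain x' where "x' \<in> R" "h x' = c"
    by auto
  then obtain x0 where x0: "x0 \<in> R" "h x0 = c"
    and x0_least: "\<And>y. y \<in> R \<Longrightarrow> h y = c \<Longrightarrow> rk x0 \<le> rk y"
    using ex_has_least_nat[of "\<lambda>y. y \<in> R \<and> h y = c" x' rk] by blast
  have "x0 \<in> T"
  proof (rule ccontr)
    assume "x0 \<notin> T"
    then obtain y where y: "y \<in> set_pmf (P x0)" "rk y < rk x0"
      using descend x0(1) by blast
    have "y \<in> R"
      using closed \<open>x0 \<notin> T\<close> x0(1) y(1) by blast
    have "h y = c"
    proof (rule expectation_eq_lower_bound_imp_eq[OF _ _ y(1)])
      show "c \<le> h z" if "z \<in> set_pmf (P x0)" for z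
        using closed \<open>x0 \<notin> T\<close> x0(1) that c_le by blast
      show "measure_pmf.expectation (P x0) h = c"
        using reach_prob_unfold[OF \<open>x0 \<notin> T\<close>] x0(2) unfolding h_def by simp
    qed
    then show False
      using x0_least[OF \<open>y \<in> R\<close>] y(2) by simp
  qed
  then have "c = 1"
    using x0(2) reach_prob_target unfolding h_def by metis
  then show ?thesis
    using c_le[OF \<open>x \<in> R\<close>] reach_prob_le_1[of P T x] unfolding h_def by simp
qed

lemma supported_path_first_step:
  assumes path: "is_path P xs" and "hd xs = x" "x \<notin> T" "last xs \<in> T"
    and supp: "supports_path P R xs"
  obtains y where "y \<in> set_pmf (P x)" "set_pmf (P x) \<subseteq> R"
    "is_path P (tl xs)" "hd (tl xs) = y" "last (tl xs) \<in> T" "supports_path P R (tl xs)"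
    "length (tl xs) < length xs"
proof -
  obtain ys where xs: "xs = x # ys"
    using path \<open>hd xs = x\<close> unfolding is_path_def by (cases xs) auto
  with \<open>x \<notin> T\<close> \<open>last xs \<in> T\<close> have "ys \<noteq> []"
    by auto
  have "hd ys \<in> set_pmf (P x)"
    using path \<open>ys \<noteq> []\<close> unfolding is_path_def xs by (auto simp: hd_conv_nth)
  moreover have "is_path P ys"
    using path \<open>ys \<noteq> []\<close> unfolding is_path_def xs by auto
  moreover have "set_pmf (P x) \<subseteq> R" "supports_path P R ys"
    using supp unfolding supports_path_def xs by auto
  ultimately show ?thesis
    using that \<open>last xs \<in> T\<close> \<open>ys \<noteq> []\<close> unfolding xs by simp
qed

lemma pair_pmf_coupling: "pair_pmf \<mu> \<nu> \<in> couplings \<mu> \<nu>"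
  by (simp add: couplings_def map_fst_pair_pmf map_snd_pair_pmf)

lemma policies_nonempty: "policies \<tau> lbl \<noteq> {}"
proof -
  define P where "P = (\<lambda>(s, t). if (s, t) \<in> diff_label_pairs lbl then return_pmf (s, t)
      else pair_pmf (\<tau> s) (\<tau> t))"
  have "P \<in> policies \<tau> lbl"
    unfolding policies_def P_def by (auto simp: pair_pmf_coupling)
  then show ?thesis by blast
qed

lemma policy_pointwise_choice:
  assumes "\<And>x. \<exists>Q \<in> policies \<tau> lbl. P x = Q x"
  shows "P \<in> policies \<tau> lbl"
  unfolding policies_def
proof (intro CollectI allI)
  fix s t
  obtain Q where "Q \<in> policies \<tau> lbl" "P (s, t) = Q (s, t)"
    using assms by blast
  then show "((s, t) \<notin> diff_label_pairs lbl \<longrightarrow> P (s, t) \<in> couplings (\<tau> s) (\<tau> t)) \<and>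
      ((s, t) \<in> diff_label_pairs lbl \<longrightarrow> P (s, t) = return_pmf (s, t))"
    unfolding policies_def by auto
qed

lemma robust_bisimulation_descending_policy:
  assumes "is_robust_bisimulation \<tau> lbl R"
  obtains P and rk :: "'s \<times> 's \<Rightarrow> nat" where "P \<in> policies \<tau> lbl"
    and "\<And>x. x \<in> R \<Longrightarrow> x \<notin> diag_pairs \<Longrightarrow> set_pmf (P x) \<subseteq> R"
    and "\<And>x. x \<in> R \<Longrightarrow> x \<notin> diag_pairs \<Longrightarrow> \<exists>y \<in> set_pmf (P x). rk y < rk x"
proof -
  define witness where "witness x n Q \<longleftrightarrow> Q \<in> policies \<tau> lbl \<and> (\<exists>xs. is_path Q xs \<and>
      hd xs = x \<and> last xs \<in> diag_pairs \<and> supports_path Q R xs \<and> length xs = n)" for x n Q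
  define rk where "rk x = (LEAST n. \<exists>Q. witness x n Q)" for x
  define W where "W x = (SOME Q. witness x (rk x) Q)" for x
  have W: "witness x (rk x) (W x)" if "x \<in> R" for x
  proof -
    have "\<exists>n Q. witness x n Q"
      using assms \<open>x \<in> R\<close> unfolding is_robust_bisimulation_def witness_def by fastforce
    then have "\<exists>Q. witness x (rk x) Q"
      unfolding rk_def by (rule LeastI_ex)
    then show ?thesis
      unfolding W_def by (rule someI_ex)
  qed
  obtain P0 where P0: "P0 \<in> policies \<tau> lbl"
    using policies_nonempty by blast
  define P where "P x = (if x \<in> R \<and> x \<notin> diag_pairs then W x x else P0 x)" for x
  have "P \<in> policies \<tau> lbl"
    by (rule policy_pointwise_choice) (use W P0 in \<open>auto simp: P_def witness_def\<close>)
  moreover have "set_pmf (P x) \<subseteq> R \<and> (\<exists>y \<in> set_pmf (P x). rk y < rk x)"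
    if "x \<in> R" "x \<notin> diag_pairs" for x
  proof -
    obtain xs where xs: "W x \<in> policies \<tau> lbl" "is_path (W x) xs" "hd xs = x"
      "last xs \<in> diag_pairs" "supports_path (W x) R xs" "length xs = rk x"
      using W[OF \<open>x \<in> R\<close>] unfolding witness_def by blast
    obtain y where y: "y \<in> set_pmf (W x x)" and closed: "set_pmf (W x x) \<subseteq> R"
      and "is_path (W x) (tl xs)" "hd (tl xs) = y" "last (tl xs) \<in> diag_pairs"
      "supports_path (W x) R (tl xs)" "length (tl xs) < length xs"
      by (rule supported_path_first_step[OF xs(2,3) \<open>x \<notin> diag_pairs\<close> xs(4,5)])
    then have "witness y (length (tl xs)) (W x)"
      unfolding witness_def using xs(1) by blast
    then have "rk y \<le> length (tl xs)"
      unfolding rk_def by (blast intro: Least_le)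
    then have "rk y < rk x"
      using \<open>length (tl xs) < length xs\<close> xs(6) by simp
    then show ?thesis
      using that y closed unfolding P_def by auto
  qed
  ultimately show ?thesis
    using that by blast
qed

theorem proposition4:
  fixes \<tau> :: "'s::finite \<Rightarrow> 's pmf" and lbl :: "'s \<Rightarrow> 'l::finite"
    and R :: "('s \<times> 's) set"
  assumes "card (range lbl) \<ge> 2"
    and "is_robust_bisimulation \<tau> lbl R"
  shows "R \<subseteq> {(s, t). robustly_bisimilar \<tau> lbl s t}"
proof
  obtain P and rk :: "'s \<times> 's \<Rightarrow> nat" where P: "P \<in> policies \<tau> lbl"
    and "\<And>x. x \<in> R \<Longrightarrow> x \<notin> diag_pairs \<Longrightarrow> set_pmf (P x) \<subseteq> R"
    and "\<And>x. x \<in> R \<Longrightarrow> x \<notin> diag_pairs \<Longrightarrow> \<exists>y \<in> set_pmf (P x). rk y < rk x"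
    using robust_bisimulation_descending_policy[OF assms(2)] by blast
  then have "reach_prob P diag_pairs x = 1" if "x \<in> R" for x
    using reach_prob_eq_1_if_descending that by blast
  then show "x \<in> {(s, t). robustly_bisimilar \<tau> lbl s t}" if "x \<in> R" for x
    using P that unfolding robustly_bisimilar_def by (cases x) auto
qed

end
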